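(* Consider Algorithm ProxSAGA (described in the context) with $b=1$, $\eta=1/(5Ln)$, run for $T\ge1$ iterations. Then the output $x_a$ satisfies $$\mathbb E\big[\|\mathcal G_\eta(x_a)\|^2\big]\le \frac{50Ln^2}{5n-2}\cdot\frac{F(x^0)-F(x^* )}{T},$$ where $x^*$ is an optimal solution of $\min_x F(x)$.
   Context: Setting: Let $n,d\ge 1$ be integers and $[n]=\{1,\dots,n\}$. Let $f_1,\dots,f_n:\mathbb R^d\to\mathbb R$ be differentiable (possibly nonconvex) functions, each $L$-smooth for some $L>0$, i.e. $\|\nabla f_i(x)-\nabla f_i(y)\|\le L\|x-y\|$ for all $x,y\in\mathbb R^d$ and $i\in[n]$. Let $f=\frac1n\sum_{i=1}^n f_i$. Let $h:\mathbb R^d\to\mathbb R\cup\{+\infty\}$ be proper, lower semicontinuous and convex, with closed domain. Let $F=f+h$, and let $x^*$ be a global minimizer of $F$ on $\mathbb R^d$ (assumed to exist). For $\eta>0$, $\mathrm{prox}_{\eta h}(x):=\arg\min_{y\in\mathbb R^d}\big(h(y)+\frac1{2\eta}\|y-x\|^2\big)$, and the gradient mapping is $\mathcal G_\eta(x):=\frac1\eta\big[x-\mathrm{prox}_{\eta h}(x-\eta\nabla f(x))\big]$. Algorithm ProxSAGA$(x^0,T,b,\eta)$: Given $x^0\in\mathbb R^d$, positive integers $T,b$ and $\eta>0$, set $\alpha^0_i=x^0$ for all $i\in[n]$. For $t=0,1,\dots$ let $g^t=\frac1n\sum_{i=1}^n\nabla f_i(\alpha^t_i)$. For $t=0,\dots,T-1$: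 draw two multisets $I_t,J_t$, each consisting of $b$ indices drawn independently and uniformly at random from $[n]$ (with replacement; $I_t$, $J_t$ independent of each other and of all previous draws); set $v^t=\frac1b\sum_{i\in I_t}\big(\nabla f_i(x^t)-\nabla f_i(\alpha^t_i)\big)+g^t$ and $x^{t+1}=\mathrm{prox}_{\eta h}(x^t-\eta v^t)$; set $\alpha^{t+1}_j=x^t$ for $j\in J_t$ and $\alpha^{t+1}_j=\alpha^t_j$ for $j\notin J_t$. The output $x_a$ is chosen uniformly at random from $\{x^0,\dots,x^{T-1}\}$. Expectations are over all randomness of the algorithm. *)

theory Defs
  imports "HOL-Analysis.Analysis" "HOL-Probability.Probability"
begin

text \<open>The extended-valued function h : R^d -> R u {+oo} is represented by its
  effective domain C (= dom h) together with the real-valued function h on C;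
  outside C the value of h is +oo (the real values of h outside C are irrelevant).\<close>

definition lsc_ext :: "'a::topological_space set \<Rightarrow> ('a \<Rightarrow> real) \<Rightarrow> bool" where
  "lsc_ext C h \<longleftrightarrow> (\<forall>a::real. closed {x \<in> C. h x \<le> a})"

definition prox :: "'a::real_normed_vector set \<Rightarrow> ('a \<Rightarrow> real) \<Rightarrow> real \<Rightarrow> 'a \<Rightarrow> 'a" where
  "prox C h \<eta> x = (THE y. y \<in> C \<and>
      (\<forall>z\<in>C. h y + (1 / (2 * \<eta>)) * (norm (y - x))\<^sup>2 \<le> h z + (1 / (2 * \<eta>)) * (norm (z - x))\<^sup>2))"

definition full_grad :: "nat \<Rightarrow> (nat \<Rightarrow> 'a \<Rightarrow> 'a::real_vector) \<Rightarrow> 'a \<Rightarrow> 'a" where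
  "full_grad n gf x = (1 / real n) *\<^sub>R (\<Sum>i<n. gf i x)"

definition grad_map :: "nat \<Rightarrow> (nat \<Rightarrow> 'a \<Rightarrow> 'a) \<Rightarrow> 'a::real_normed_vector set \<Rightarrow> ('a \<Rightarrow> real)
    \<Rightarrow> real \<Rightarrow> 'a \<Rightarrow> 'a" where
  "grad_map n gf C h \<eta> x = (1 / \<eta>) *\<^sub>R (x - prox C h \<eta> (x - \<eta> *\<^sub>R full_grad n gf x))"

text \<open>State of ProxSAGA after t iterations: (x^t, alpha^t), given the random draws.
  ds t = (I_t, J_t), each a function {0..<b} -> {0..<n} listing the b indices of the
  multiset.\<close>
fun saga_state :: "nat \<Rightarrow> (nat \<Rightarrow> 'a \<Rightarrow> 'a) \<Rightarrow> 'a::real_normed_vector set \<Rightarrow> ('a \<Rightarrow> real)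
    \<Rightarrow> real \<Rightarrow> nat \<Rightarrow> 'a \<Rightarrow> (nat \<Rightarrow> (nat \<Rightarrow> nat) \<times> (nat \<Rightarrow> nat)) \<Rightarrow> nat \<Rightarrow> 'a \<times> (nat \<Rightarrow> 'a)" where
  "saga_state n gf C h \<eta> b x0 ds 0 = (x0, (\<lambda>_. x0))"
| "saga_state n gf C h \<eta> b x0 ds (Suc t) =
     (let (x, \<alpha>) = saga_state n gf C h \<eta> b x0 ds t;
          (I, J) = ds t;
          g = (1 / real n) *\<^sub>R (\<Sum>i<n. gf i (\<alpha> i));
          v = (1 / real b) *\<^sub>R (\<Sum>k<b. gf (I k) x - gf (I k) (\<alpha> (I k))) + g
      in (prox C h \<eta> (x - \<eta> *\<^sub>R v), (\<lambda>j. if j \<in> J ` {..<b} then x else \<alpha> j)))"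

definition saga_draws :: "nat \<Rightarrow> nat \<Rightarrow> nat \<Rightarrow> (nat \<Rightarrow> (nat \<Rightarrow> nat) \<times> (nat \<Rightarrow> nat)) pmf" where
  "saga_draws n b T = Pi_pmf {..<T} (\<lambda>_. 0, \<lambda>_. 0)
     (\<lambda>_. pair_pmf (Pi_pmf {..<b} 0 (\<lambda>_. pmf_of_set {..<n}))
                   (Pi_pmf {..<b} 0 (\<lambda>_. pmf_of_set {..<n})))"

text \<open>E[ ||G_eta(x_a)||^2 ] where x_a is uniform on {x^0,...,x^{T-1}}, independent of the draws.\<close>
definition saga_expected_gm :: "nat \<Rightarrow> (nat \<Rightarrow> 'a \<Rightarrow> 'a) \<Rightarrow> 'a::real_normed_vector set \<Rightarrow> ('a \<Rightarrow> real)
    \<Rightarrow> 'a \<Rightarrow> nat \<Rightarrow> nat \<Rightarrow> real \<Rightarrow> real" where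
  "saga_expected_gm n gf C h x0 T b \<eta> =
     measure_pmf.expectation (pair_pmf (saga_draws n b T) (pmf_of_set {..<T}))
       (\<lambda>(ds, a). (norm (grad_map n gf C h \<eta> (fst (saga_state n gf C h \<eta> b x0 ds a))))\<^sup>2)"

end

theory Submission
  imports Defs
begin

text \<open>The Lyapunov function \<open>\<Phi>(x, \<alpha>) = F(x) + (L/5) (1/n) \<Sum>\<^sub>i \<parallel>x - \<alpha>\<^sub>i\<parallel>\<^sup>2\<close>, which couples the iterate
  with the table of stored points, decreases in expectation by at least \<open>\<gamma> \<parallel>G\<^sub>\<eta>(x)\<parallel>\<^sup>2\<close> in every
  iteration, where \<open>\<gamma> = (5n - 2) / (50 L n\<^sup>2)\<close>. For one step, the three-point inequality of the
  proximal operator and the quadratic bounds of \<open>L\<close>-smooth functions compare the stochastic step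
  with the exact proximal gradient step; the SAGA estimator has variance at most \<open>L\<^sup>2\<close> times the
  table term, and the increase of the table term caused by moving \<open>x\<close> is paid for by the decrease
  of \<open>F\<close>. Summing over \<open>t < T\<close> and using \<open>\<Phi> \<ge> F(x\<^sup>*)\<close> gives the bound.\<close>

section \<open>Quadratic inequalities\<close>

lemma lipschitz_gradient_upper_bound:
  fixes \<phi> :: "'a::real_inner \<Rightarrow> real"
  assumes der: "\<And>x. (\<phi> has_derivative (\<lambda>v. g x \<bullet> v)) (at x)"
    and lip: "\<And>x y. norm (g x - g y) \<le> L * norm (x - y)"
  shows "\<phi> y \<le> \<phi> x + g x \<bullet> (y - x) + L / 2 * (norm (y - x))\<^sup>2"
proof -
  define d where "d = y - x"
  define k where "k t = \<phi> (x + t *\<^sub>R d) - t * (g x \<bullet> d) - t\<^sup>2 * (L / 2 * (norm d)\<^sup>2)" for t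
  have line: "((\<lambda>t. \<phi> (x + t *\<^sub>R d)) has_real_derivative g (x + t *\<^sub>R d) \<bullet> d) (at t)" for t
  proof -
    have "((\<lambda>t. x + t *\<^sub>R d) has_derivative (\<lambda>s. s *\<^sub>R d)) (at t)"
      by (auto intro!: derivative_eq_intros)
    from has_derivative_compose[OF this der] show ?thesis
      unfolding has_field_derivative_def
      by (rule has_derivative_eq_rhs) (simp add: fun_eq_iff)
  qed
  have "k 1 \<le> k 0"
  proof (rule DERIV_nonpos_imp_nonincreasing[of 0 1 k])
    fix t :: real assume "0 \<le> t"
    have "(g (x + t *\<^sub>R d) - g x) \<bullet> d \<le> norm (g (x + t *\<^sub>R d) - g x) * norm d"
      by (rule norm_cauchy_schwarz)
    also have "\<dots> \<le> L * norm (t *\<^sub>R d) * norm d"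
      using lip[of "x + t *\<^sub>R d" x] by (intro mult_right_mono) auto
    also have "\<dots> = 2 * t * (L / 2 * (norm d)\<^sup>2)"
      using \<open>0 \<le> t\<close> by (simp add: power2_eq_square)
    finally have "g (x + t *\<^sub>R d) \<bullet> d - g x \<bullet> d - 2 * t * (L / 2 * (norm d)\<^sup>2) \<le> 0"
      by (simp add: inner_diff_left)
    moreover have "(k has_real_derivative
        g (x + t *\<^sub>R d) \<bullet> d - g x \<bullet> d - 2 * t * (L / 2 * (norm d)\<^sup>2)) (at t)"
      unfolding k_def by (auto intro!: derivative_eq_intros line)
    ultimately show "\<exists>y. (k has_real_derivative y) (at t) \<and> y \<le> 0" by blast
  qed simp
  then show ?thesis unfolding k_def d_def by simp
qed

lemma lipschitz_gradient_quadratic_bound: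
  fixes \<phi> :: "'a::real_inner \<Rightarrow> real"
  assumes der: "\<And>x. (\<phi> has_derivative (\<lambda>v. g x \<bullet> v)) (at x)"
    and lip: "\<And>x y. norm (g x - g y) \<le> L * norm (x - y)"
  shows "\<bar>\<phi> y - \<phi> x - g x \<bullet> (y - x)\<bar> \<le> L / 2 * (norm (y - x))\<^sup>2"
proof -
  have "((\<lambda>x. - \<phi> x) has_derivative (\<lambda>v. - g x \<bullet> v)) (at x)" for x
    using has_derivative_minus[OF der[of x]] by simp
  moreover have "norm (- g x - - g y) \<le> L * norm (x - y)" for x y
    using lip[of x y] by (simp add: norm_minus_commute)
  ultimately have "- \<phi> y \<le> - \<phi> x + - g x \<bullet> (y - x) + L / 2 * (norm (y - x))\<^sup>2"
    by (rule lipschitz_gradient_upper_bound)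
  then have "\<phi> x + g x \<bullet> (y - x) - L / 2 * (norm (y - x))\<^sup>2 \<le> \<phi> y"
    by (simp add: inner_minus_left)
  with lipschitz_gradient_upper_bound[OF der lip, of y x] show ?thesis
    unfolding abs_le_iff by linarith
qed

lemma power2_norm_add:
  fixes u v :: "'a::real_inner"
  shows "(norm (u + v))\<^sup>2 = (norm u)\<^sup>2 + 2 * (u \<bullet> v) + (norm v)\<^sup>2"
  by (simp add: power2_norm_eq_inner inner_add_left inner_add_right inner_commute[of v u])

lemma inner_le_Young:
  fixes u v :: "'a::real_inner"
  assumes "q > 0"
  shows "2 * (u \<bullet> v) \<le> q * (norm u)\<^sup>2 + (norm v)\<^sup>2 / q"
proof -
  have "0 \<le> (norm (q *\<^sub>R u - v))\<^sup>2" by simp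
  also have "\<dots> = q * (q * (norm u)\<^sup>2 + (norm v)\<^sup>2 / q) - q * (2 * (u \<bullet> v))"
    using assms unfolding power2_norm_eq_inner
    by (simp add: inner_diff_left inner_diff_right inner_commute[of v u] algebra_simps)
  finally show ?thesis
    using assms by (simp add: mult_le_cancel_left_pos)
qed

lemma power2_norm_add_le:
  fixes u v :: "'a::real_inner"
  assumes "q > 0"
  shows "(norm (u + v))\<^sup>2 \<le> (1 + q) * (norm u)\<^sup>2 + (1 + 1 / q) * (norm v)\<^sup>2"
  using power2_norm_add[of u v] inner_le_Young[OF assms, of u v] by (simp add: algebra_simps)

lemma sum_power2_norm_centered_le:
  fixes u :: "'i \<Rightarrow> 'a::real_inner"
  assumes "finite I"
  defines "m \<equiv> (1 / real (card I)) *\<^sub>R (\<Sum>i\<in>I. u i)"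
  shows "(\<Sum>i\<in>I. (norm (m - u i))\<^sup>2) \<le> (\<Sum>i\<in>I. (norm (u i))\<^sup>2)"
proof -
  have sum_u: "(\<Sum>i\<in>I. u i) = real (card I) *\<^sub>R m"
    using assms by (cases "I = {}") (simp_all add: m_def)
  have "(\<Sum>i\<in>I. (norm (m - u i))\<^sup>2)
      = (\<Sum>i\<in>I. (norm m)\<^sup>2 - 2 * (m \<bullet> u i) + (norm (u i))\<^sup>2)"
    by (simp add: power2_norm_eq_inner inner_diff_left inner_diff_right inner_commute[of "u _" m]
        algebra_simps)
  also have "\<dots> = (\<Sum>i\<in>I. (norm (u i))\<^sup>2) - real (card I) * (norm m)\<^sup>2"
    by (simp add: sum.distrib sum_subtractf sum_distrib_left[symmetric] inner_sum_right[symmetric]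
        sum_u power2_norm_eq_inner)
  finally show ?thesis by simp
qed

lemma power2_norm_convex_combination:
  fixes y z w :: "'a::real_inner"
  shows "(norm ((1 - t) *\<^sub>R y + t *\<^sub>R z - w))\<^sup>2 =
     (1 - t) * (norm (y - w))\<^sup>2 + t * (norm (z - w))\<^sup>2 - t * (1 - t) * (norm (y - z))\<^sup>2"
proof -
  have "(1 - t) *\<^sub>R y + t *\<^sub>R z - w = (1 - t) *\<^sub>R (y - w) + t *\<^sub>R (z - w)"
    "y - z = (y - w) - (z - w)"
    by (simp_all add: algebra_simps)
  then show ?thesis
    unfolding power2_norm_eq_inner
    by (simp add: inner_add_left inner_add_right inner_diff_left inner_diff_right
        inner_commute[of "z - w" "y - w"] algebra_simps)
qed

section \<open>The proximal operator\<close>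

lemma closed_sublevel_lsc_ext_add_continuous:
  fixes C :: "'a::metric_space set"
  assumes C: "closed C" and h: "lsc_ext C h" and q: "continuous_on UNIV q"
  shows "closed {y\<in>C. h y + q y \<le> c}"
  unfolding closed_sequential_limits
proof (intro allI impI, elim conjE)
  fix ys l assume ys: "\<forall>k. ys k \<in> {y\<in>C. h y + q y \<le> c}" and lim: "ys \<longlonglongrightarrow> l"
  have "l \<in> C"
    using C ys lim unfolding closed_sequential_limits by blast
  have "isCont q l"
    using q by (simp add: continuous_on_eq_continuous_at)
  then have q_lim: "(\<lambda>k. q (ys k)) \<longlonglongrightarrow> q l"
    using lim by (rule isCont_tendsto_compose)
  have "h l \<le> (c - q l) + e" if "e > 0" for e
  proof -
    have "eventually (\<lambda>k. q l - e < q (ys k)) sequentially"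
      using order_tendstoD(1)[OF q_lim] \<open>e > 0\<close> by simp
    moreover have "ys k \<in> {y\<in>C. h y \<le> c - q l + e}" if "q l - e < q (ys k)" for k
      using ys[rule_format, of k] that by simp
    ultimately have "eventually (\<lambda>k. ys k \<in> {y\<in>C. h y \<le> c - q l + e}) sequentially"
      by (rule eventually_mono)
    moreover have "closed {y\<in>C. h y \<le> c - q l + e}"
      using h unfolding lsc_ext_def by simp
    ultimately have "l \<in> {y\<in>C. h y \<le> c - q l + e}"
      using Lim_in_closed_set[OF _ _ sequentially_bot lim] by blast
    then show ?thesis by simp
  qed
  then have "h l \<le> c - q l" by (rule field_le_epsilon)
  with \<open>l \<in> C\<close> show "l \<in> {y\<in>C. h y + q y \<le> c}" by simp
qed

lemma bounded_sublevel_if_quadratic_minorant: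
  fixes \<psi> :: "'a::real_normed_vector \<Rightarrow> real"
  assumes minorant: "\<And>y. y \<in> C \<Longrightarrow> c - B * norm (y - y0) + \<kappa> * (norm (y - y0))\<^sup>2 \<le> \<psi> y"
    and "\<kappa> > 0"
  shows "bounded {y\<in>C. \<psi> y \<le> M}"
proof -
  define R where "R = max 1 ((\<bar>M - c\<bar> + B) / \<kappa>)"
  have "{y\<in>C. \<psi> y \<le> M} \<subseteq> cball y0 R"
  proof
    fix y assume y: "y \<in> {y\<in>C. \<psi> y \<le> M}"
    define r where "r = norm (y - y0)"
    have "r \<le> R"
    proof (cases "r \<le> 1")
      case False
      have "\<kappa> * r * r \<le> (M - c) + B * r"
        using minorant[of y] y by (simp add: r_def power2_eq_square)
      also have "M - c \<le> \<bar>M - c\<bar> * r"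
        using mult_left_mono[of 1 r "\<bar>M - c\<bar>"] False by simp
      finally have "(\<kappa> * r) * r \<le> (\<bar>M - c\<bar> + B) * r"
        by (simp add: algebra_simps)
      then have "\<kappa> * r \<le> \<bar>M - c\<bar> + B"
        by (rule mult_right_le_imp_le) (use False in simp)
      then have "r \<le> (\<bar>M - c\<bar> + B) / \<kappa>"
        using \<open>\<kappa> > 0\<close> by (simp add: pos_le_divide_eq mult.commute)
      then show ?thesis by (simp add: R_def)
    qed (simp add: R_def)
    then show "y \<in> cball y0 R" by (simp add: r_def dist_norm norm_minus_commute)
  qed
  then show ?thesis using bounded_cball bounded_subset by blast
qed

lemma bdd_below_if_quadratic_minorant:
  fixes \<psi> :: "'a::real_normed_vector \<Rightarrow> real"
  assumes minorant: "\<And>y. y \<in> C \<Longrightarrow> c - B * norm (y - y0) + \<kappa> * (norm (y - y0))\<^sup>2 \<le> \<psi> y"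
    and "\<kappa> > 0"
  shows "bdd_below (\<psi> ` C)"
proof (rule bdd_belowI2)
  fix y assume "y \<in> C"
  define r where "r = norm (y - y0)"
  have "0 \<le> (2 * \<kappa> * r - B)\<^sup>2 / (4 * \<kappa>)" using \<open>\<kappa> > 0\<close> by simp
  also have "\<dots> = \<kappa> * r\<^sup>2 - B * r + B\<^sup>2 / (4 * \<kappa>)"
    using \<open>\<kappa> > 0\<close> by (simp add: field_simps power2_eq_square)
  finally show "c - B\<^sup>2 / (4 * \<kappa>) \<le> \<psi> y"
    using minorant[OF \<open>y \<in> C\<close>] by (simp add: r_def)
qed

lemma attains_min_if_compact_sublevels:
  fixes \<psi> :: "'a::heine_borel \<Rightarrow> real"
  assumes "C \<noteq> {}" and bdd: "bdd_below (\<psi> ` C)"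
    and compact: "\<And>c. compact {y\<in>C. \<psi> y \<le> c}"
  obtains y where "y \<in> C" "\<And>z. z \<in> C \<Longrightarrow> \<psi> y \<le> \<psi> z"
proof -
  define m where "m = Inf (\<psi> ` C)"
  define K where "K k = {y\<in>C. \<psi> y \<le> m + 1 / real (Suc k)}" for k
  have "\<Inter>(range K) \<noteq> {}"
  proof (rule compact_nest)
    show "K k \<noteq> {}" for k
      using cInf_less_iff[OF _ bdd, of "m + 1 / real (Suc k)"] \<open>C \<noteq> {}\<close>
      by (force simp: K_def m_def)
    show "K j \<subseteq> K i" if "i \<le> j" for i j
      using that by (auto simp: K_def frac_le intro: order_trans)
  qed (simp add: K_def compact)
  then obtain y where y: "\<And>k. y \<in> K k" by blast
  have "\<psi> y \<le> m"
  proof (rule field_le_epsilon)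
    fix e :: real assume "e > 0"
    then obtain k where "inverse (real (Suc k)) < e" using reals_Archimedean by blast
    moreover have "\<psi> y \<le> m + 1 / real (Suc k)" using y[of k] by (simp add: K_def)
    ultimately show "\<psi> y \<le> m + e" by (simp add: inverse_eq_divide)
  qed
  moreover have "y \<in> C" using y[of 0] by (simp add: K_def)
  ultimately show ?thesis
    using that cInf_lower[OF _ bdd] by (force simp: m_def)
qed

lemma convex_quadratic_min_three_point:
  fixes h :: "'a::real_inner \<Rightarrow> real"
  assumes "convex C" "convex_on C h"
    and "y \<in> C" and min: "\<And>u. u \<in> C \<Longrightarrow> h y + a * (norm (y - w))\<^sup>2 \<le> h u + a * (norm (u - w))\<^sup>2"
    and "z \<in> C"
  shows "h y + a * (norm (y - w))\<^sup>2 + a * (norm (y - z))\<^sup>2 \<le> h z + a * (norm (z - w))\<^sup>2"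
proof -
  define \<psi> where "\<psi> u = h u + a * (norm (u - w))\<^sup>2" for u
  have "s * (a * (norm (y - z))\<^sup>2) \<le> \<psi> z - \<psi> y" if "0 < s" "s < 1" for s
  proof -
    define t where "t = 1 - s"
    have t: "0 < t" "t < 1" using that by (simp_all add: t_def)
    define u where "u = (1 - t) *\<^sub>R y + t *\<^sub>R z"
    have "u \<in> C"
      using \<open>convex C\<close> \<open>y \<in> C\<close> \<open>z \<in> C\<close> t by (simp add: u_def convex_def)
    have "h u \<le> (1 - t) * h y + t * h z"
      using convex_onD[OF \<open>convex_on C h\<close>, of t y z] \<open>y \<in> C\<close> \<open>z \<in> C\<close> t by (simp add: u_def)
    then have "\<psi> u \<le> (1 - t) * \<psi> y + t * \<psi> z - a * t * (1 - t) * (norm (y - z))\<^sup>2"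
      unfolding \<psi>_def u_def power2_norm_convex_combination by (simp add: algebra_simps)
    with min[OF \<open>u \<in> C\<close>] have "t * (\<psi> y + (1 - t) * (a * (norm (y - z))\<^sup>2)) \<le> t * \<psi> z"
      unfolding \<psi>_def[symmetric] by (simp add: algebra_simps)
    with t have "\<psi> y + (1 - t) * (a * (norm (y - z))\<^sup>2) \<le> \<psi> z"
      by (simp add: mult_le_cancel_left_pos)
    then show ?thesis by (simp add: t_def)
  qed
  then have "a * (norm (y - z))\<^sup>2 \<le> \<psi> z - \<psi> y" by (rule field_le_mult_one_interval)
  then show ?thesis by (simp add: \<psi>_def)
qed

text \<open>The curvature bound \<open>K < 1/(2\<eta>)\<close> makes the proximal objective coercive, so its minimiser
  exists; strong convexity makes it unique, hence equal to the value of the definite description.\<close>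
lemma prox_three_point:
  fixes C :: "'a::euclidean_space set"
  assumes C: "closed C" "convex C" "C \<noteq> {}" and h: "convex_on C h" "lsc_ext C h"
    and "\<eta> > 0"
    and minorant: "\<And>y. y \<in> C \<Longrightarrow> a0 - B * norm (y - c0) - K / 2 * (norm (y - c0))\<^sup>2 \<le> h y"
    and K: "K < 1 / (2 * \<eta>)"
  shows "prox C h \<eta> w \<in> C"
    and "z \<in> C \<Longrightarrow> h (prox C h \<eta> w) + 1 / (2 * \<eta>) * (norm (prox C h \<eta> w - w))\<^sup>2
      + 1 / (2 * \<eta>) * (norm (prox C h \<eta> w - z))\<^sup>2 \<le> h z + 1 / (2 * \<eta>) * (norm (z - w))\<^sup>2"
proof -
  define a where "a = 1 / (2 * \<eta>)"
  define \<psi> where "\<psi> y = h y + a * (norm (y - w))\<^sup>2" for y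
  define \<kappa> where "\<kappa> = (a - K) / 2"
  define c1 where "c1 = a0 - a * (norm (w - c0))\<^sup>2"
  have "a > 0" "\<kappa> > 0" using \<open>\<eta> > 0\<close> K by (simp_all add: a_def \<kappa>_def)
  have \<psi>_minorant: "c1 - B * norm (y - c0) + \<kappa> * (norm (y - c0))\<^sup>2 \<le> \<psi> y" if "y \<in> C" for y
  proof -
    have "(norm ((y - w) + (w - c0)))\<^sup>2 \<le> 2 * (norm (y - w))\<^sup>2 + 2 * (norm (w - c0))\<^sup>2"
      using power2_norm_add_le[of 1 "y - w" "w - c0"] by simp
    then have "a * (norm (y - c0))\<^sup>2 \<le> a * (2 * (norm (y - w))\<^sup>2 + 2 * (norm (w - c0))\<^sup>2)"
      using \<open>a > 0\<close> by (intro mult_left_mono) auto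
    then have "a / 2 * (norm (y - c0))\<^sup>2 \<le> a * (norm (y - w))\<^sup>2 + a * (norm (w - c0))\<^sup>2"
      by (simp add: algebra_simps)
    moreover have "\<kappa> * (norm (y - c0))\<^sup>2 = a / 2 * (norm (y - c0))\<^sup>2 - K / 2 * (norm (y - c0))\<^sup>2"
      by (simp add: \<kappa>_def field_simps)
    ultimately show ?thesis
      using minorant[OF that] by (simp add: \<psi>_def c1_def)
  qed
  have "compact {y\<in>C. \<psi> y \<le> c}" for c
    unfolding compact_eq_bounded_closed
  proof
    show "bounded {y\<in>C. \<psi> y \<le> c}"
      using bounded_sublevel_if_quadratic_minorant[OF \<psi>_minorant \<open>\<kappa> > 0\<close>] .
    show "closed {y\<in>C. \<psi> y \<le> c}"
      unfolding \<psi>_def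
      by (rule closed_sublevel_lsc_ext_add_continuous[OF C(1) h(2)]) (intro continuous_intros)
  qed
  then obtain y where "y \<in> C" and y_min: "\<And>z. z \<in> C \<Longrightarrow> \<psi> y \<le> \<psi> z"
    using attains_min_if_compact_sublevels[OF C(3) bdd_below_if_quadratic_minorant[OF \<psi>_minorant]]
      \<open>\<kappa> > 0\<close> by blast
  have three_point: "\<psi> y + a * (norm (y - z))\<^sup>2 \<le> \<psi> z" if "z \<in> C" for z
    using convex_quadratic_min_three_point[OF C(2) h(1) \<open>y \<in> C\<close> _ that] y_min
    by (simp add: \<psi>_def)
  have "prox C h \<eta> w = y"
    unfolding prox_def
  proof (rule the_equality)
    fix y' assume y': "y' \<in> C \<and> (\<forall>z\<in>C. h y' + 1 / (2 * \<eta>) * (norm (y' - w))\<^sup>2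
        \<le> h z + 1 / (2 * \<eta>) * (norm (z - w))\<^sup>2)"
    then have "\<psi> y + a * (norm (y - y'))\<^sup>2 \<le> \<psi> y"
      using three_point[of y'] \<open>y \<in> C\<close> by (fastforce simp: \<psi>_def a_def)
    then show "y' = y" using \<open>a > 0\<close> by (simp add: mult_le_0_iff)
  qed (use \<open>y \<in> C\<close> y_min in \<open>simp add: \<psi>_def a_def\<close>)
  then show "prox C h \<eta> w \<in> C"
    and "z \<in> C \<Longrightarrow> h (prox C h \<eta> w) + 1 / (2 * \<eta>) * (norm (prox C h \<eta> w - w))\<^sup>2
      + 1 / (2 * \<eta>) * (norm (prox C h \<eta> w - z))\<^sup>2 \<le> h z + 1 / (2 * \<eta>) * (norm (z - w))\<^sup>2"
    using \<open>y \<in> C\<close> three_point by (simp_all add: \<psi>_def a_def)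
qed

section \<open>One iteration of ProxSAGA\<close>

locale prox_saga =
  fixes n :: nat and L :: real and fs :: "nat \<Rightarrow> 'a::euclidean_space \<Rightarrow> real"
    and gf :: "nat \<Rightarrow> 'a \<Rightarrow> 'a" and C :: "'a set" and h :: "'a \<Rightarrow> real" and xstar :: 'a
  assumes n_pos: "n \<ge> 1" and L_pos: "L > 0"
    and grad: "\<And>i x. i < n \<Longrightarrow> (fs i has_derivative (\<lambda>v. gf i x \<bullet> v)) (at x)"
    and smooth: "\<And>i x y. i < n \<Longrightarrow> norm (gf i x - gf i y) \<le> L * norm (x - y)"
    and dom_nonempty: "C \<noteq> {}" and dom_closed: "closed C" and dom_convex: "convex C"
    and h_convex: "convex_on C h" and h_lsc: "lsc_ext C h"
    and xstar_min: "\<And>x. x \<in> C \<Longrightarrow>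
      (1 / real n) * (\<Sum>i<n. fs i xstar) + h xstar \<le> (1 / real n) * (\<Sum>i<n. fs i x) + h x"
begin

definition f :: "'a \<Rightarrow> real" where "f x = (1 / real n) * (\<Sum>i<n. fs i x)"
definition F :: "'a \<Rightarrow> real" where "F x = f x + h x"
definition \<eta> :: real where "\<eta> = 1 / (5 * L * real n)"
definition \<gamma> :: real where "\<gamma> = (5 * real n - 2) / (50 * L * (real n)\<^sup>2)"

abbreviation grad_f :: "'a \<Rightarrow> 'a" where "grad_f \<equiv> full_grad n gf"
abbreviation G :: "'a \<Rightarrow> 'a" where "G \<equiv> grad_map n gf C h \<eta>"

lemma eta_pos: "\<eta> > 0"
  using L_pos n_pos by (simp add: \<eta>_def)

lemma inverse_two_eta: "1 / (2 * \<eta>) = 5 * L * real n / 2"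
  by (simp add: \<eta>_def)

lemma gamma_pos: "\<gamma> > 0"
  using L_pos n_pos by (simp add: \<gamma>_def)

lemma gamma_eq: "(1 / (2 * \<eta>) - L) * \<eta>\<^sup>2 = \<gamma>"
  using L_pos n_pos by (simp add: \<gamma>_def \<eta>_def field_simps power2_eq_square)

lemma f_has_derivative: "(f has_derivative (\<lambda>v. grad_f x \<bullet> v)) (at x)"
proof -
  have "((\<lambda>x. (1 / real n) * (\<Sum>i<n. fs i x)) has_derivative
      (\<lambda>v. (1 / real n) * (\<Sum>i<n. gf i x \<bullet> v))) (at x)"
    by (intro has_derivative_mult_right has_derivative_sum grad) simp
  then show ?thesis
    by (simp add: f_def[abs_def] full_grad_def inner_sum_left)
qed

lemma grad_f_lipschitz: "norm (grad_f x - grad_f y) \<le> L * norm (x - y)"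
proof -
  have "norm (grad_f x - grad_f y) = (1 / real n) * norm (\<Sum>i<n. gf i x - gf i y)"
    by (simp add: full_grad_def scaleR_diff_right[symmetric] sum_subtractf)
  also have "\<dots> \<le> (1 / real n) * (\<Sum>i<n. L * norm (x - y))"
    by (intro mult_left_mono sum_norm_le smooth) auto
  also have "\<dots> = L * norm (x - y)"
    using n_pos by simp
  finally show ?thesis .
qed

lemma f_quadratic_bound: "\<bar>f y - f x - grad_f x \<bullet> (y - x)\<bar> \<le> L / 2 * (norm (y - x))\<^sup>2"
  using f_has_derivative grad_f_lipschitz by (rule lipschitz_gradient_quadratic_bound)

lemma h_quadratic_minorant:
  assumes "y \<in> C"
  shows "h xstar - norm (grad_f xstar) * norm (y - xstar) - L / 2 * (norm (y - xstar))\<^sup>2 \<le> h y"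
proof -
  have "f xstar + h xstar \<le> f y + h y"
    using xstar_min[OF assms] by (simp add: f_def)
  moreover have "grad_f xstar \<bullet> (y - xstar) \<le> norm (grad_f xstar) * norm (y - xstar)"
    by (rule norm_cauchy_schwarz)
  ultimately show ?thesis
    using f_quadratic_bound[of y xstar] unfolding abs_le_iff by linarith
qed

lemma L_less_inverse_two_eta: "L < 1 / (2 * \<eta>)"
  using L_pos n_pos by (simp add: inverse_two_eta)

lemma prox_mem: "prox C h \<eta> w \<in> C"
  by (rule prox_three_point(1)[OF dom_closed dom_convex dom_nonempty h_convex h_lsc eta_pos
        h_quadratic_minorant L_less_inverse_two_eta])

lemma prox_three_point_ineq:
  assumes "z \<in> C"
  shows "h (prox C h \<eta> w) + 1 / (2 * \<eta>) * (norm (prox C h \<eta> w - w))\<^sup>2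
    + 1 / (2 * \<eta>) * (norm (prox C h \<eta> w - z))\<^sup>2 \<le> h z + 1 / (2 * \<eta>) * (norm (z - w))\<^sup>2"
  by (rule prox_three_point(2)[OF dom_closed dom_convex dom_nonempty h_convex h_lsc eta_pos
        h_quadratic_minorant L_less_inverse_two_eta assms])

lemma prox_gradient_step_ineq:
  assumes "z \<in> C" and y: "y = prox C h \<eta> (x - \<eta> *\<^sub>R d)"
  shows "F y \<le> F z + (y - z) \<bullet> (grad_f x - d) + (L / 2 - 1 / (2 * \<eta>)) * (norm (y - x))\<^sup>2
    + (L / 2 + 1 / (2 * \<eta>)) * (norm (z - x))\<^sup>2 - 1 / (2 * \<eta>) * (norm (y - z))\<^sup>2"
proof -
  define a where "a = 1 / (2 * \<eta>)"
  define w where "w = x - \<eta> *\<^sub>R d"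
  have expand: "a * (norm (u - w))\<^sup>2 = a * (norm (u - x))\<^sup>2 + (u - x) \<bullet> d + a * (\<eta>\<^sup>2 * (norm d)\<^sup>2)"
    for u
  proof -
    have uw: "u - w = (u - x) + \<eta> *\<^sub>R d" by (simp add: w_def)
    have "(norm (u - w))\<^sup>2 = (norm (u - x))\<^sup>2 + 2 * \<eta> * ((u - x) \<bullet> d) + \<eta>\<^sup>2 * (norm d)\<^sup>2"
      unfolding uw using power2_norm_add[of "u - x" "\<eta> *\<^sub>R d"] by (simp add: power_mult_distrib)
    then show ?thesis
      using eta_pos by (simp add: a_def distrib_left)
  qed
  have "h y + a * (norm (y - x))\<^sup>2 + (y - x) \<bullet> d + a * (norm (y - z))\<^sup>2
      \<le> h z + a * (norm (z - x))\<^sup>2 + (z - x) \<bullet> d"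
    using prox_three_point_ineq[OF \<open>z \<in> C\<close>, of w] expand[of y] expand[of z]
    unfolding y w_def[symmetric] a_def[symmetric] by linarith
  moreover have "(y - x) \<bullet> d - (z - x) \<bullet> d = (y - z) \<bullet> d"
    "grad_f x \<bullet> (y - x) - grad_f x \<bullet> (z - x) = grad_f x \<bullet> (y - z)"
    "(y - z) \<bullet> (grad_f x - d) = grad_f x \<bullet> (y - z) - (y - z) \<bullet> d"
    by (simp add: inner_diff_left, simp add: inner_diff_right,
        simp only: inner_diff_right inner_commute[of "y - z" "grad_f x"])
  ultimately show ?thesis
    using f_quadratic_bound[of y x] f_quadratic_bound[of z x]
    unfolding F_def a_def[symmetric] abs_le_iff by (simp add: algebra_simps)
qed

definition saga_estimate :: "'a \<Rightarrow> (nat \<Rightarrow> 'a) \<Rightarrow> nat \<Rightarrow> 'a" where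
  "saga_estimate x \<alpha> i = gf i x - gf i (\<alpha> i) + (1 / real n) *\<^sub>R (\<Sum>j<n. gf j (\<alpha> j))"

definition saga_step :: "'a \<Rightarrow> (nat \<Rightarrow> 'a) \<Rightarrow> nat \<Rightarrow> 'a" where
  "saga_step x \<alpha> i = prox C h \<eta> (x - \<eta> *\<^sub>R saga_estimate x \<alpha> i)"

definition table_dist :: "'a \<Rightarrow> (nat \<Rightarrow> 'a) \<Rightarrow> real" where
  "table_dist x \<alpha> = (1 / real n) * (\<Sum>k<n. (norm (x - \<alpha> k))\<^sup>2)"

definition lyapunov :: "'a \<times> (nat \<Rightarrow> 'a) \<Rightarrow> real" where
  "lyapunov s = F (fst s) + L / 5 * table_dist (fst s) (snd s)"

lemma table_dist_nonneg: "table_dist x \<alpha> \<ge> 0"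
  by (simp add: table_dist_def sum_nonneg)

text \<open>The stochastic step is compared with the exact proximal gradient step
  \<open>x\<^sub>g = prox (x - \<eta> \<nabla>f(x))\<close>, whose distance to \<open>x\<close> is \<open>\<eta> \<parallel>G(x)\<parallel>\<close>.\<close>
lemma saga_step_descent:
  assumes "x \<in> C"
  shows "F (saga_step x \<alpha> i) \<le> F x + \<eta> / 2 * (norm (grad_f x - saga_estimate x \<alpha> i))\<^sup>2
    + (L / 2 - 1 / (2 * \<eta>)) * (norm (saga_step x \<alpha> i - x))\<^sup>2 - \<gamma> * (norm (G x))\<^sup>2"
proof -
  define a where "a = 1 / (2 * \<eta>)"
  define y where "y = saga_step x \<alpha> i"
  define xg where "xg = prox C h \<eta> (x - \<eta> *\<^sub>R grad_f x)"
  define e where "e = grad_f x - saga_estimate x \<alpha> i"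
  have "F y \<le> F xg + (y - xg) \<bullet> e + (L / 2 - a) * (norm (y - x))\<^sup>2
      + (L / 2 + a) * (norm (xg - x))\<^sup>2 - a * (norm (y - xg))\<^sup>2"
    using prox_gradient_step_ineq[OF prox_mem] unfolding a_def e_def y_def xg_def saga_step_def
    by blast
  moreover have "F xg \<le> F x + (L / 2 - a) * (norm (xg - x))\<^sup>2 - a * (norm (xg - x))\<^sup>2"
    using prox_gradient_step_ineq[OF \<open>x \<in> C\<close> xg_def] by (simp add: a_def)
  moreover have "(y - xg) \<bullet> e \<le> a * (norm (y - xg))\<^sup>2 + \<eta> / 2 * (norm e)\<^sup>2"
  proof -
    have "2 * ((y - xg) \<bullet> e) \<le> 2 * a * (norm (y - xg))\<^sup>2 + (norm e)\<^sup>2 / (2 * a)"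
      using inner_le_Young[of "2 * a"] eta_pos by (simp add: a_def)
    moreover have "(norm e)\<^sup>2 / (2 * a) = \<eta> * (norm e)\<^sup>2"
      by (simp add: a_def)
    ultimately show ?thesis by linarith
  qed
  moreover have "(L - a) * (norm (xg - x))\<^sup>2 = - \<gamma> * (norm (G x))\<^sup>2"
  proof -
    have "x - xg = \<eta> *\<^sub>R G x"
      using eta_pos by (simp add: grad_map_def xg_def)
    then have "(norm (xg - x))\<^sup>2 = \<eta>\<^sup>2 * (norm (G x))\<^sup>2"
      using eta_pos by (simp add: norm_minus_commute power_mult_distrib)
    then have "(L - a) * (norm (xg - x))\<^sup>2 = - ((a - L) * \<eta>\<^sup>2) * (norm (G x))\<^sup>2"
      by (simp add: algebra_simps)
    then show ?thesis
      unfolding a_def gamma_eq .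
  qed
  ultimately show ?thesis
    unfolding y_def[symmetric] e_def[symmetric] a_def[symmetric] by (simp add: algebra_simps)
qed

lemma saga_estimate_variance:
  "(\<Sum>i<n. (norm (grad_f x - saga_estimate x \<alpha> i))\<^sup>2) / real n \<le> L\<^sup>2 * table_dist x \<alpha>"
proof -
  define u where "u i = gf i x - gf i (\<alpha> i)" for i
  have "grad_f x - saga_estimate x \<alpha> i = (1 / real (card {..<n})) *\<^sub>R (\<Sum>j<n. u j) - u i" for i
    by (simp add: full_grad_def saga_estimate_def u_def sum_subtractf scaleR_diff_right algebra_simps)
  then have "(\<Sum>i<n. (norm (grad_f x - saga_estimate x \<alpha> i))\<^sup>2) \<le> (\<Sum>i<n. (norm (u i))\<^sup>2)"
    using sum_power2_norm_centered_le[of "{..<n}" u] by simp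
  also have "\<dots> \<le> (\<Sum>i<n. L\<^sup>2 * (norm (x - \<alpha> i))\<^sup>2)"
  proof (rule sum_mono)
    fix i assume "i \<in> {..<n}"
    then have "norm (u i) \<le> L * norm (x - \<alpha> i)" by (simp add: u_def smooth)
    then show "(norm (u i))\<^sup>2 \<le> L\<^sup>2 * (norm (x - \<alpha> i))\<^sup>2"
      by (metis norm_ge_zero power_mono power_mult_distrib)
  qed
  finally show ?thesis
    using n_pos by (simp add: table_dist_def sum_distrib_left[symmetric] divide_right_mono)
qed

lemma table_dist_le:
  assumes "q > 0"
  shows "table_dist y \<alpha> \<le> (1 + q) * (norm (y - x))\<^sup>2 + (1 + 1 / q) * table_dist x \<alpha>"
proof -
  define A where "A = (norm (y - x))\<^sup>2"
  have "(\<Sum>k<n. (norm (y - \<alpha> k))\<^sup>2) \<le> (\<Sum>k<n. (1 + q) * A + (1 + 1 / q) * (norm (x - \<alpha> k))\<^sup>2)"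
    using power2_norm_add_le[OF assms, of "y - x" "x - \<alpha> _"] by (intro sum_mono) (simp add: A_def)
  also have "\<dots> = real n * ((1 + q) * A) + (1 + 1 / q) * (\<Sum>k<n. (norm (x - \<alpha> k))\<^sup>2)"
    by (simp add: sum.distrib sum_distrib_left)
  finally have "table_dist y \<alpha>
      \<le> (1 / real n) * (real n * ((1 + q) * A) + (1 + 1 / q) * (\<Sum>k<n. (norm (x - \<alpha> k))\<^sup>2))"
    unfolding table_dist_def using n_pos by (intro mult_left_mono) auto
  also have "\<dots> = (1 + q) * A + (1 + 1 / q) * table_dist x \<alpha>"
    using n_pos assms by (simp add: table_dist_def field_simps)
  finally show ?thesis by (simp add: A_def)
qed

lemma table_dist_fun_upd:
  assumes "j < n"
  shows "table_dist y (\<alpha>(j := x))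
    = table_dist y \<alpha> + ((norm (y - x))\<^sup>2 - (norm (y - \<alpha> j))\<^sup>2) / real n"
proof -
  have "(\<Sum>k<n. (norm (y - (\<alpha>(j := x)) k))\<^sup>2)
      = (norm (y - x))\<^sup>2 + (\<Sum>k\<in>{..<n} - {j}. (norm (y - \<alpha> k))\<^sup>2)"
    using assms by (simp add: sum.remove[of _ j])
  also have "\<dots> = (norm (y - x))\<^sup>2 + (\<Sum>k<n. (norm (y - \<alpha> k))\<^sup>2) - (norm (y - \<alpha> j))\<^sup>2"
    using assms by (simp add: sum_diff1)
  finally have sum_upd: "(\<Sum>k<n. (norm (y - (\<alpha>(j := x)) k))\<^sup>2)
      = (\<Sum>k<n. (norm (y - \<alpha> k))\<^sup>2) + ((norm (y - x))\<^sup>2 - (norm (y - \<alpha> j))\<^sup>2)"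
    by simp
  show ?thesis
    unfolding table_dist_def sum_upd using n_pos by (simp add: field_simps)
qed

lemma table_dist_update_avg:
  "(\<Sum>j<n. table_dist y (\<alpha>(j := x))) / real n
    \<le> (2 * real n - 1) * (norm (y - x))\<^sup>2 + (1 - 1 / (2 * real n - 1)) * table_dist x \<alpha>"
proof -
  define A where "A = (norm (y - x))\<^sup>2"
  have "(\<Sum>j<n. table_dist y (\<alpha>(j := x)))
      = (\<Sum>j<n. table_dist y \<alpha> + (A - (norm (y - \<alpha> j))\<^sup>2) / real n)"
    by (intro sum.cong) (simp_all add: table_dist_fun_upd A_def)
  also have "\<dots> = real n * table_dist y \<alpha> + (real n * A - (\<Sum>j<n. (norm (y - \<alpha> j))\<^sup>2)) / real n"
    by (simp add: sum.distrib sum_subtractf sum_divide_distrib[symmetric])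
  also have "\<dots> = real n * ((1 - 1 / real n) * table_dist y \<alpha> + A / real n)"
    using n_pos by (simp add: table_dist_def field_simps)
  finally have "(\<Sum>j<n. table_dist y (\<alpha>(j := x))) / real n = (1 - 1 / real n) * table_dist y \<alpha> + A / real n"
    using n_pos by simp
  also have "\<dots> \<le> (1 - 1 / real n) * (2 * real n * A + (2 * real n / (2 * real n - 1)) * table_dist x \<alpha>)
      + A / real n"
    using table_dist_le[of "2 * real n - 1" y \<alpha> x] n_pos
    by (intro add_right_mono mult_left_mono) (auto simp: A_def field_simps)
  also have "\<dots> = 2 * (real n - 1) * A + A / real n + (1 - 1 / (2 * real n - 1)) * table_dist x \<alpha>"
    using n_pos by (simp add: field_simps)
  also have "\<dots> \<le> (2 * real n - 1) * A + (1 - 1 / (2 * real n - 1)) * table_dist x \<alpha>"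
  proof -
    have "A / real n \<le> A" using n_pos by (simp add: A_def divide_le_eq mult_le_cancel_left1)
    then show ?thesis by (simp add: algebra_simps)
  qed
  finally show ?thesis by (simp add: A_def)
qed

lemma step_coefficient_nonpos: "L / 2 - 1 / (2 * \<eta>) + L / 5 * (2 * real n - 1) \<le> 0"
proof -
  have "L * 1 \<le> L * real n"
    using L_pos n_pos by (intro mult_left_mono) auto
  moreover have "L / 2 - 5 * L * real n / 2 + L / 5 * (2 * real n - 1) = 3 / 10 * L - 21 / 10 * (L * real n)"
    by (simp add: algebra_simps)
  ultimately show ?thesis
    unfolding inverse_two_eta using L_pos by linarith
qed

lemma table_coefficient_le: "\<eta> / 2 * L\<^sup>2 + L / 5 * (1 - 1 / (2 * real n - 1)) \<le> L / 5"
proof -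
  have "\<eta> / 2 * L\<^sup>2 = L / (10 * real n)"
    using L_pos n_pos by (simp add: \<eta>_def power2_eq_square)
  moreover have "L / (10 * real n) \<le> L / (5 * (2 * real n - 1))"
    using L_pos n_pos by (intro divide_left_mono) auto
  moreover have "L / 5 * (1 - 1 / (2 * real n - 1)) = L / 5 - L / (5 * (2 * real n - 1))"
    using n_pos by (simp add: field_simps)
  ultimately show ?thesis by linarith
qed

lemma lyapunov_update_avg_le:
  assumes "x \<in> C"
  shows "(\<Sum>j<n. lyapunov (saga_step x \<alpha> i, \<alpha>(j := x))) / real n
    \<le> F x + \<eta> / 2 * (norm (grad_f x - saga_estimate x \<alpha> i))\<^sup>2 - \<gamma> * (norm (G x))\<^sup>2
      + L / 5 * (1 - 1 / (2 * real n - 1)) * table_dist x \<alpha>"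
proof -
  define y where "y = saga_step x \<alpha> i"
  define A where "A = (norm (y - x))\<^sup>2"
  have "(\<Sum>j<n. lyapunov (y, \<alpha>(j := x))) = real n * F y + L / 5 * (\<Sum>j<n. table_dist y (\<alpha>(j := x)))"
    by (simp add: lyapunov_def sum.distrib sum_distrib_left)
  then have "(\<Sum>j<n. lyapunov (y, \<alpha>(j := x))) / real n
      = F y + L / 5 * ((\<Sum>j<n. table_dist y (\<alpha>(j := x))) / real n)"
    using n_pos by (simp add: field_simps)
  also have "\<dots> \<le> F y + L / 5 * ((2 * real n - 1) * A + (1 - 1 / (2 * real n - 1)) * table_dist x \<alpha>)"
    using table_dist_update_avg[of y \<alpha> x] L_pos by (intro add_left_mono mult_left_mono) (simp_all add: A_def)
  finally show ?thesis
    using saga_step_descent[OF assms, of \<alpha> i] mult_right_mono[OF step_coefficient_nonpos, of A]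
    unfolding y_def[symmetric] A_def[symmetric] by (simp add: A_def algebra_simps)
qed

lemma lyapunov_expected_decrease:
  assumes "x \<in> C"
  shows "(\<Sum>i<n. \<Sum>j<n. lyapunov (saga_step x \<alpha> i, \<alpha>(j := x))) / (real n)\<^sup>2
    \<le> lyapunov (x, \<alpha>) - \<gamma> * (norm (G x))\<^sup>2"
proof -
  define E where "E i = (norm (grad_f x - saga_estimate x \<alpha> i))\<^sup>2" for i
  define c where "c = F x - \<gamma> * (norm (G x))\<^sup>2 + L / 5 * (1 - 1 / (2 * real n - 1)) * table_dist x \<alpha>"
  have "(\<Sum>i<n. \<Sum>j<n. lyapunov (saga_step x \<alpha> i, \<alpha>(j := x))) / (real n)\<^sup>2
      = (\<Sum>i<n. (\<Sum>j<n. lyapunov (saga_step x \<alpha> i, \<alpha>(j := x))) / real n) / real n"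
    by (simp add: sum_divide_distrib power2_eq_square)
  also have "\<dots> \<le> (\<Sum>i<n. c + \<eta> / 2 * E i) / real n"
    using lyapunov_update_avg_le[OF assms]
    by (intro divide_right_mono sum_mono) (simp_all add: c_def E_def algebra_simps)
  also have "\<dots> = (real n * c + \<eta> / 2 * (\<Sum>i<n. E i)) / real n"
    by (simp add: sum.distrib sum_distrib_left)
  also have "\<dots> = c + \<eta> / 2 * ((\<Sum>i<n. E i) / real n)"
    using n_pos by (simp add: field_simps)
  also have "\<dots> \<le> c + \<eta> / 2 * (L\<^sup>2 * table_dist x \<alpha>)"
    using eta_pos by (intro add_left_mono mult_left_mono) (simp_all add: E_def saga_estimate_variance)
  also have "\<dots> \<le> lyapunov (x, \<alpha>) - \<gamma> * (norm (G x))\<^sup>2"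
    using mult_right_mono[OF table_coefficient_le table_dist_nonneg[of x \<alpha>]]
    unfolding c_def lyapunov_def fst_conv snd_conv by (simp only: distrib_right mult.assoc)
  finally show ?thesis .
qed

end

section \<open>The distribution of the iterates\<close>

lemma expectation_pair_pmf_finite:
  fixes f :: "'a \<times> 'b \<Rightarrow> real"
  assumes A: "finite (set_pmf A)" and B: "finite (set_pmf B)"
  shows "measure_pmf.expectation (pair_pmf A B) f
    = measure_pmf.expectation B (\<lambda>b. measure_pmf.expectation A (\<lambda>a. f (a, b)))"
proof -
  have "measure_pmf.expectation (pair_pmf A B) f
      = (\<Sum>(a, b)\<in>set_pmf A \<times> set_pmf B. f (a, b) * (pmf A a * pmf B b))"
    using A B by (subst integral_measure_pmf_real) (auto simp: pmf_pair intro!: sum.cong)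
  also have "\<dots> = (\<Sum>a\<in>set_pmf A. \<Sum>b\<in>set_pmf B. f (a, b) * (pmf A a * pmf B b))"
    by (rule sum.cartesian_product[symmetric])
  also have "\<dots> = (\<Sum>b\<in>set_pmf B. \<Sum>a\<in>set_pmf A. f (a, b) * (pmf A a * pmf B b))"
    by (rule sum.swap)
  also have "\<dots> = (\<Sum>b\<in>set_pmf B. (\<Sum>a\<in>set_pmf A. f (a, b) * pmf A a) * pmf B b)"
    by (simp add: sum_distrib_right mult.assoc)
  also have "\<dots> = measure_pmf.expectation B (\<lambda>b. measure_pmf.expectation A (\<lambda>a. f (a, b)))"
    using A B by (simp add: integral_measure_pmf_real)
  finally show ?thesis .
qed

lemma expectation_mono_finite_pmf:
  fixes f g :: "'a \<Rightarrow> real"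
  assumes "finite (set_pmf M)" "\<And>x. x \<in> set_pmf M \<Longrightarrow> f x \<le> g x"
  shows "measure_pmf.expectation M f \<le> measure_pmf.expectation M g"
  using assms by (intro integral_mono_AE) (auto simp: integrable_measure_pmf_finite AE_measure_pmf_iff)

context prox_saga
begin

text \<open>For \<open>b = 1\<close> the draws \<open>I\<^sub>t, J\<^sub>t\<close> are single indices, stored at position \<open>0\<close>.\<close>
definition saga_update :: "'a \<times> (nat \<Rightarrow> 'a) \<Rightarrow> (nat \<Rightarrow> nat) \<times> (nat \<Rightarrow> nat) \<Rightarrow> 'a \<times> (nat \<Rightarrow> 'a)" where
  "saga_update s d = (saga_step (fst s) (snd s) (fst d 0), (snd s)(snd d 0 := fst s))"

abbreviation state :: "'a \<Rightarrow> (nat \<Rightarrow> (nat \<Rightarrow> nat) \<times> (nat \<Rightarrow> nat)) \<Rightarrow> nat \<Rightarrow> 'a \<times> (nat \<Rightarrow> 'a)" where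
  "state x0 ds t \<equiv> saga_state n gf C h \<eta> 1 x0 ds t"

lemma state_Suc: "state x0 ds (Suc t) = saga_update (state x0 ds t) (ds t)"
proof -
  have "(\<lambda>j. if j \<in> J ` {..<1} then x else \<alpha> j) = \<alpha>(J 0 := x)"
    for J :: "nat \<Rightarrow> nat" and x :: 'a and \<alpha>
    by (simp add: fun_eq_iff lessThan_Suc)
  then show ?thesis
    by (simp add: saga_update_def saga_step_def saga_estimate_def case_prod_unfold Let_def lessThan_Suc)
qed

lemma state_cong:
  assumes "\<And>k. k < t \<Longrightarrow> ds k = ds' k"
  shows "state x0 ds t = state x0 ds' t"
  using assms by (induction t) (simp_all only: state_Suc, simp_all)

definition index_pmf :: "(nat \<Rightarrow> nat) pmf" where
  "index_pmf = Pi_pmf {..<1} 0 (\<lambda>_. pmf_of_set {..<n})"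

definition draw_pmf :: "((nat \<Rightarrow> nat) \<times> (nat \<Rightarrow> nat)) pmf" where
  "draw_pmf = pair_pmf index_pmf index_pmf"

definition draws_pmf :: "nat \<Rightarrow> (nat \<Rightarrow> (nat \<Rightarrow> nat) \<times> (nat \<Rightarrow> nat)) pmf" where
  "draws_pmf t = Pi_pmf {..<t} (\<lambda>_. 0, \<lambda>_. 0) (\<lambda>_. draw_pmf)"

definition state_pmf :: "'a \<Rightarrow> nat \<Rightarrow> ('a \<times> (nat \<Rightarrow> 'a)) pmf" where
  "state_pmf x0 t = map_pmf (\<lambda>ds. state x0 ds t) (draws_pmf t)"

lemma saga_draws_eq: "saga_draws n 1 T = draws_pmf T"
  by (simp add: saga_draws_def draws_pmf_def draw_pmf_def index_pmf_def)

lemma index_pmf_eq: "index_pmf = map_pmf (\<lambda>i b. if b = 0 then i else 0) (pmf_of_set {..<n})"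
  by (simp add: index_pmf_def lessThan_Suc Pi_pmf_singleton)

lemma finite_set_draw_pmf: "finite (set_pmf draw_pmf)"
  using n_pos by (simp add: draw_pmf_def index_pmf_eq lessThan_empty_iff)

lemma draws_pmf_Suc: "draws_pmf (Suc t) = map_pmf (\<lambda>(d, ds). ds(t := d)) (pair_pmf draw_pmf (draws_pmf t))"
  unfolding draws_pmf_def lessThan_Suc by (rule Pi_pmf_insert) auto

lemma finite_set_draws_pmf: "finite (set_pmf (draws_pmf t))"
  by (induction t) (simp_all add: draws_pmf_def[of 0] draws_pmf_Suc finite_set_draw_pmf)

lemma finite_set_state_pmf: "finite (set_pmf (state_pmf x0 t))"
  by (simp add: state_pmf_def finite_set_draws_pmf)

lemma state_pmf_0: "state_pmf x0 0 = return_pmf (x0, \<lambda>_. x0)"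
  by (simp add: state_pmf_def draws_pmf_def)

lemma state_pmf_Suc:
  "state_pmf x0 (Suc t) = map_pmf (\<lambda>(d, s). saga_update s d) (pair_pmf draw_pmf (state_pmf x0 t))"
proof -
  have step: "state x0 (ds(t := d)) (Suc t) = saga_update (state x0 ds t) d" for ds d
  proof -
    have "state x0 (ds(t := d)) t = state x0 ds t" by (rule state_cong) simp
    then show ?thesis by (simp only: state_Suc fun_upd_same)
  qed
  have "state_pmf x0 (Suc t)
      = map_pmf (\<lambda>(d, ds). state x0 (ds(t := d)) (Suc t)) (pair_pmf draw_pmf (draws_pmf t))"
    by (simp add: state_pmf_def draws_pmf_Suc pmf.map_comp o_def case_prod_unfold
        del: saga_state.simps)
  also have "\<dots> = map_pmf (\<lambda>(d, ds). saga_update (state x0 ds t) d) (pair_pmf draw_pmf (draws_pmf t))"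
    by (simp only: step)
  also have "\<dots> = map_pmf (\<lambda>(d, s). saga_update s d) (pair_pmf draw_pmf (state_pmf x0 t))"
    by (simp add: state_pmf_def pair_map_pmf2 pmf.map_comp o_def case_prod_unfold
        del: saga_state.simps)
  finally show ?thesis .
qed

lemma state_pmf_restrict:
  assumes "t \<le> T"
  shows "map_pmf (\<lambda>ds. state x0 ds t) (draws_pmf T) = state_pmf x0 t"
proof -
  define restrict where "restrict ds k = (if k \<in> {..<t} then ds k else (\<lambda>_. 0, \<lambda>_. 0))"
    for ds :: "nat \<Rightarrow> (nat \<Rightarrow> nat) \<times> (nat \<Rightarrow> nat)" and k
  have "draws_pmf t = map_pmf restrict (draws_pmf T)"
    unfolding draws_pmf_def restrict_def using assms by (intro Pi_pmf_subset) auto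
  then have "state_pmf x0 t = map_pmf (\<lambda>ds. state x0 (restrict ds) t) (draws_pmf T)"
    by (simp add: state_pmf_def pmf.map_comp o_def)
  also have "\<dots> = map_pmf (\<lambda>ds. state x0 ds t) (draws_pmf T)"
    by (intro pmf.map_cong refl state_cong) (simp add: restrict_def)
  finally show ?thesis ..
qed

lemma expectation_draw_pmf:
  "measure_pmf.expectation draw_pmf (\<lambda>d. \<psi> (fst d 0) (snd d 0))
    = (\<Sum>i<n. \<Sum>j<n. \<psi> i j) / (real n)\<^sup>2"
proof -
  define U where "U = pmf_of_set {..<n}"
  have "{..<n} \<noteq> {}" using n_pos by (simp add: lessThan_empty_iff)
  have "measure_pmf.expectation draw_pmf (\<lambda>d. \<psi> (fst d 0) (snd d 0))
      = measure_pmf.expectation (pair_pmf U U) (\<lambda>p. \<psi> (fst p) (snd p))"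
    by (simp add: draw_pmf_def index_pmf_eq map_pair[symmetric] U_def case_prod_unfold)
  also have "\<dots> = measure_pmf.expectation U (\<lambda>j. measure_pmf.expectation U (\<lambda>i. \<psi> i j))"
    using \<open>{..<n} \<noteq> {}\<close> by (simp add: expectation_pair_pmf_finite U_def)
  also have "\<dots> = (\<Sum>j<n. \<Sum>i<n. \<psi> i j) / (real n)\<^sup>2"
    using \<open>{..<n} \<noteq> {}\<close>
    by (simp add: U_def integral_pmf_of_set sum_divide_distrib[symmetric] power2_eq_square)
  also have "\<dots> = (\<Sum>i<n. \<Sum>j<n. \<psi> i j) / (real n)\<^sup>2"
    by (subst sum.swap) (rule refl)
  finally show ?thesis .
qed

lemma expected_lyapunov_step:
  assumes "fst s \<in> C"
  shows "measure_pmf.expectation draw_pmf (\<lambda>d. lyapunov (saga_update s d))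
    \<le> lyapunov s - \<gamma> * (norm (G (fst s)))\<^sup>2"
  using expectation_draw_pmf[of "\<lambda>i j. lyapunov (saga_step (fst s) (snd s) i, (snd s)(j := fst s))"]
    lyapunov_expected_decrease[OF assms, of "snd s"]
  by (simp add: saga_update_def)

lemma state_pmf_in_dom:
  assumes "x0 \<in> C" "s \<in> set_pmf (state_pmf x0 t)"
  shows "fst s \<in> C"
  using assms(2)
  by (induction t arbitrary: s)
    (auto simp: assms(1) state_pmf_0 state_pmf_Suc saga_update_def saga_step_def prox_mem)

lemma lyapunov_telescoping:
  assumes "x0 \<in> C"
  shows "measure_pmf.expectation (state_pmf x0 t) lyapunov
    + \<gamma> * (\<Sum>k<t. measure_pmf.expectation (state_pmf x0 k) (\<lambda>s. (norm (G (fst s)))\<^sup>2)) \<le> F x0"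
proof (induction t)
  case 0
  then show ?case by (simp add: state_pmf_0 lyapunov_def table_dist_def)
next
  case (Suc t)
  define E where "E t g = measure_pmf.expectation (state_pmf x0 t) g"
    for t and g :: "'a \<times> (nat \<Rightarrow> 'a) \<Rightarrow> real"
  define gm where "gm s = (norm (G (fst s)))\<^sup>2" for s :: "'a \<times> (nat \<Rightarrow> 'a)"
  have "E (Suc t) lyapunov
      = measure_pmf.expectation (pair_pmf draw_pmf (state_pmf x0 t)) (\<lambda>p. lyapunov (saga_update (snd p) (fst p)))"
    by (simp add: E_def state_pmf_Suc case_prod_unfold)
  also have "\<dots> = E t (\<lambda>s. measure_pmf.expectation draw_pmf (\<lambda>d. lyapunov (saga_update s d)))"
    by (simp add: E_def expectation_pair_pmf_finite finite_set_draw_pmf finite_set_state_pmf)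
  also have "\<dots> \<le> E t (\<lambda>s. lyapunov s - \<gamma> * gm s)"
    unfolding E_def gm_def
    by (intro expectation_mono_finite_pmf finite_set_state_pmf expected_lyapunov_step
        state_pmf_in_dom[OF assms])
  also have "\<dots> = E t lyapunov - \<gamma> * E t gm"
    by (simp add: E_def finite_set_state_pmf integrable_measure_pmf_finite)
  finally show ?case
    using Suc.IH unfolding E_def gm_def[abs_def] by (simp add: algebra_simps)
qed

lemma lyapunov_ge_min:
  assumes "fst s \<in> C"
  shows "F xstar \<le> lyapunov s"
proof -
  have "F xstar \<le> F (fst s)"
    using xstar_min[OF assms] by (simp add: F_def f_def)
  moreover have "0 \<le> L / 5 * table_dist (fst s) (snd s)"
    using L_pos table_dist_nonneg by simp
  ultimately show ?thesis by (simp add: lyapunov_def)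
qed

lemma expected_gradient_mapping_eq:
  assumes "T \<ge> 1"
  shows "saga_expected_gm n gf C h x0 T 1 \<eta>
    = (\<Sum>t<T. measure_pmf.expectation (state_pmf x0 t) (\<lambda>s. (norm (G (fst s)))\<^sup>2)) / real T"
proof -
  define gm where "gm s = (norm (G (fst s)))\<^sup>2" for s :: "'a \<times> (nat \<Rightarrow> 'a)"
  have "{..<T} \<noteq> {}" using assms by (simp add: lessThan_empty_iff)
  have "saga_expected_gm n gf C h x0 T 1 \<eta>
      = measure_pmf.expectation (pmf_of_set {..<T})
          (\<lambda>t. measure_pmf.expectation (draws_pmf T) (\<lambda>ds. gm (state x0 ds t)))"
    unfolding saga_expected_gm_def saga_draws_eq using \<open>{..<T} \<noteq> {}\<close>
    by (simp add: gm_def case_prod_unfold expectation_pair_pmf_finite finite_set_draws_pmf)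
  also have "\<dots> = (\<Sum>t<T. measure_pmf.expectation (draws_pmf T) (\<lambda>ds. gm (state x0 ds t))) / real T"
    using \<open>{..<T} \<noteq> {}\<close> by (simp add: integral_pmf_of_set)
  also have "\<dots> = (\<Sum>t<T. measure_pmf.expectation (state_pmf x0 t) gm) / real T"
  proof (intro arg_cong2[where f = "(/)"] sum.cong refl)
    fix t assume "t \<in> {..<T}"
    then have "map_pmf (\<lambda>ds. state x0 ds t) (draws_pmf T) = state_pmf x0 t"
      by (intro state_pmf_restrict) simp
    then show "measure_pmf.expectation (draws_pmf T) (\<lambda>ds. gm (state x0 ds t))
        = measure_pmf.expectation (state_pmf x0 t) gm"
      by (metis integral_map_pmf)
  qed
  finally show ?thesis by (simp add: gm_def[abs_def])
qed

lemma expected_gradient_mapping_bound: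
  assumes "x0 \<in> C" and "T \<ge> 1"
  shows "saga_expected_gm n gf C h x0 T 1 \<eta> \<le> (F x0 - F xstar) / (\<gamma> * real T)"
proof -
  define S where "S = (\<Sum>t<T. measure_pmf.expectation (state_pmf x0 t) (\<lambda>s. (norm (G (fst s)))\<^sup>2))"
  have "F xstar \<le> measure_pmf.expectation (state_pmf x0 T) lyapunov"
    using expectation_mono_finite_pmf[OF finite_set_state_pmf, of x0 T "\<lambda>_. F xstar" lyapunov]
      lyapunov_ge_min state_pmf_in_dom[OF assms(1)] by simp
  then have "\<gamma> * S \<le> F x0 - F xstar"
    using lyapunov_telescoping[OF assms(1), of T] by (simp add: S_def)
  then have "S / real T \<le> (F x0 - F xstar) / (\<gamma> * real T)"
    using gamma_pos assms(2) by (simp add: field_simps)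
  then show ?thesis
    using expected_gradient_mapping_eq[OF assms(2)] by (simp add: S_def)
qed

end

theorem theorem3:
  fixes n :: nat and L :: real and T :: nat
    and fs :: "nat \<Rightarrow> 'a::euclidean_space \<Rightarrow> real" and gf :: "nat \<Rightarrow> 'a \<Rightarrow> 'a"
    and C :: "'a set" and h :: "'a \<Rightarrow> real" and x0 xstar :: 'a
  assumes n_pos: "n \<ge> 1"
    and L_pos: "L > 0"
    and grad: "\<And>i x. i < n \<Longrightarrow> (fs i has_derivative (\<lambda>v. gf i x \<bullet> v)) (at x)"
    and smooth: "\<And>i x y. i < n \<Longrightarrow> norm (gf i x - gf i y) \<le> L * norm (x - y)"
    and dom_nonempty: "C \<noteq> {}"
    and dom_closed: "closed C"
    and h_convex: "convex C" "convex_on C h"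
    and h_lsc: "lsc_ext C h"
    and xstar_dom: "xstar \<in> C"
    and xstar_min: "\<And>x. x \<in> C \<Longrightarrow>
           (1 / real n) * (\<Sum>i<n. fs i xstar) + h xstar \<le> (1 / real n) * (\<Sum>i<n. fs i x) + h x"
    and T_pos: "T \<ge> 1"
  shows "x0 \<in> C \<longrightarrow>
    saga_expected_gm n gf C h x0 T 1 (1 / (5 * L * real n))
      \<le> (50 * L * (real n)\<^sup>2 / (5 * real n - 2)) *
         (((1 / real n) * (\<Sum>i<n. fs i x0) + h x0) - ((1 / real n) * (\<Sum>i<n. fs i xstar) + h xstar)) / real T"
proof -
  interpret prox_saga n L fs gf C h xstar
    using assms by unfold_locales auto
  have "(F x0 - F xstar) / (\<gamma> * real T)
      = (50 * L * (real n)\<^sup>2 / (5 * real n - 2)) * (F x0 - F xstar) / real T"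
    by (simp add: \<gamma>_def)
  then show ?thesis
    using expected_gradient_mapping_bound[of x0 T] T_pos by (simp add: \<eta>_def F_def f_def)
qed

end
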